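(* Let $H\in(0,1)$ and let $B^H=\{B^H_t:t\in[0,1]\}$ be a fractional Brownian motion with Hurst parameter $H$. Then $$(2\beta+2H+1)\int_0^1 t^{2\beta}(B^H_t)^2\,dt\longrightarrow (B^H_1)^2\quad\text{in }L^2(\Omega)\text{ as }\beta\uparrow+\infty.$$
   Context: A fractional Brownian motion with Hurst parameter $H\in(0,1)$ is a centered Gaussian process with covariance $\mathbb E[B^H_tB^H_s]=\tfrac12(s^{2H}+t^{2H}-|t-s|^{2H})$. *)

theory Defs
  imports "HOL-Probability.Probability"
begin

definition gaussian_rv :: "'a measure \<Rightarrow> ('a \<Rightarrow> real) \<Rightarrow> bool" where
  "gaussian_rv M X \<longleftrightarrow> X \<in> borel_measurable M \<and>
     ((\<exists>\<mu> \<sigma>. \<sigma> > 0 \<and> distributed M lborel X (normal_density \<mu> \<sigma>)) \<or>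
      (\<exists>c. AE \<omega> in M. X \<omega> = c))"

definition fbm :: "'a measure \<Rightarrow> real \<Rightarrow> (real \<Rightarrow> 'a \<Rightarrow> real) \<Rightarrow> bool" where
  "fbm M H B \<longleftrightarrow> prob_space M \<and> 0 < H \<and> H < 1 \<and>
     (\<forall>t\<in>{0..1}. B t \<in> borel_measurable M) \<and>
     (\<forall>I c. finite I \<and> I \<subseteq> {0..1} \<longrightarrow> gaussian_rv M (\<lambda>\<omega>. \<Sum>t\<in>I. c t * B t \<omega>)) \<and>
     (\<forall>t\<in>{0..1}. (\<integral>\<omega>. B t \<omega> \<partial>M) = 0) \<and>
     (\<forall>s\<in>{0..1}. \<forall>t\<in>{0..1}.
        (\<integral>\<omega>. B t \<omega> * B s \<omega> \<partial>M) = (s powr (2*H) + t powr (2*H) - \<bar>t - s\<bar> powr (2*H)) / 2) \<and>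
     (\<forall>\<omega>\<in>space M. continuous_on {0..1} (\<lambda>t. B t \<omega>))"

end

theory Submission
  imports Defs "HOL-Real_Asymp.Real_Asymp"
begin

text \<open>
  Let \<open>w(t) = t^(2\<beta>)\<close>, so that \<open>\<integral>\<^sub>0\<^sup>1 w = 1/(2\<beta>+1)\<close>, and \<open>c = 2\<beta>+2H+1\<close>. Then
  \<open>Y_\<beta> - B_1^2 = c \<integral> w(t) (B_t^2 - B_1^2) dt + (c/(2\<beta>+1) - 1) B_1^2\<close>, and the Cauchy-Schwarz
  inequality for the weight \<open>w\<close> bounds the square of the first term by
  \<open>c^2/(2\<beta>+1) \<integral> w(t) (B_t^2 - B_1^2)^2 dt\<close>. Writing \<open>(x^2 - y^2)^2 = (x - y)^2 (x + y)^2\<close>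
  and combining AM-GM with \<open>E Z^4 = 3 (E Z^2)^2\<close> for the centred Gaussians \<open>B_t - B_1\<close> and \<open>B_t + B_1\<close> gives
  \<open>E (B_t^2 - B_1^2)^2 \<le> 26 (1 - t)^(2H)\<close>, so by Tonelli
  \<open>E (Y_\<beta> - B_1^2)^2 \<le> 52 (c/(2\<beta>+1)) c \<integral> t^(2\<beta>) (1 - t)^(2H) dt + 6 (c/(2\<beta>+1) - 1)^2\<close>.
  Both terms vanish as \<open>\<beta> \<rightarrow> \<infinity>\<close>: the probability density \<open>(2\<beta>+1) t^(2\<beta>)\<close> concentrates
  at \<open>t = 1\<close>, where \<open>(1 - t)^(2H)\<close> vanishes.
\<close>

lemma centered_normal_moments:
  assumes "\<sigma> > 0" and Z: "distributed M lborel Z (normal_density 0 \<sigma>)"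
  shows "integrable M (\<lambda>\<omega>. (Z \<omega>) ^ k)" "(\<integral>\<omega>. (Z \<omega>)\<^sup>2 \<partial>M) = \<sigma>\<^sup>2"
    "(\<integral>\<omega>. (Z \<omega>) ^ 4 \<partial>M) = 3 * \<sigma> ^ 4"
proof -
  show "integrable M (\<lambda>\<omega>. (Z \<omega>) ^ k)"
    using distributed_integrable[OF Z, of "\<lambda>x. x ^ k"] integrable_normal_moment[OF \<open>\<sigma> > 0\<close>, of 0 k] by simp
  have even_moment: "(\<integral>\<omega>. (Z \<omega>) ^ (2 * k) \<partial>M) = fact (2 * k) / ((2 / \<sigma>\<^sup>2) ^ k * fact k)" for k
    using distributed_integral[OF Z, of "\<lambda>x. x ^ (2 * k)"] integral_normal_moment_even[OF \<open>\<sigma> > 0\<close>, of 0 k] by simp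
  show "(\<integral>\<omega>. (Z \<omega>)\<^sup>2 \<partial>M) = \<sigma>\<^sup>2"
    using even_moment[of 1] by simp
  show "(\<integral>\<omega>. (Z \<omega>) ^ 4 \<partial>M) = 3 * \<sigma> ^ 4"
    using even_moment[of 2] \<open>\<sigma> > 0\<close>
    by (simp add: fact_numeral field_simps power2_eq_square eval_nat_numeral)
qed

lemma centered_gaussian_rv_moments:
  assumes "prob_space M" and Z: "gaussian_rv M Z" and mean: "(\<integral>\<omega>. Z \<omega> \<partial>M) = 0"
  shows "integrable M Z" "integrable M (\<lambda>\<omega>. (Z \<omega>)\<^sup>2)" "integrable M (\<lambda>\<omega>. (Z \<omega>) ^ 4)"
    "(\<integral>\<omega>. (Z \<omega>) ^ 4 \<partial>M) = 3 * (\<integral>\<omega>. (Z \<omega>)\<^sup>2 \<partial>M)\<^sup>2"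
proof -
  interpret prob_space M by fact
  have [measurable]: "Z \<in> borel_measurable M" using Z unfolding gaussian_rv_def by blast
  from Z consider (normal) \<mu> \<sigma> where "\<sigma> > 0" "distributed M lborel Z (normal_density \<mu> \<sigma>)"
    | (degenerate) c where "AE \<omega> in M. Z \<omega> = c"
    unfolding gaussian_rv_def by blast
  then have "integrable M Z \<and> integrable M (\<lambda>\<omega>. (Z \<omega>)\<^sup>2) \<and> integrable M (\<lambda>\<omega>. (Z \<omega>) ^ 4) \<and>
    (\<integral>\<omega>. (Z \<omega>) ^ 4 \<partial>M) = 3 * (\<integral>\<omega>. (Z \<omega>)\<^sup>2 \<partial>M)\<^sup>2"
  proof cases
    case (normal \<mu> \<sigma>)
    with mean have "\<mu> = 0" using normal_distributed_expectation by simp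
    with normal have "distributed M lborel Z (normal_density 0 \<sigma>)" by simp
    note moments = centered_normal_moments[OF normal(1) this]
    show ?thesis
      using moments(1)[of 1] moments(1)[of 2] moments(1)[of 4] moments(2,3)
      by (simp add: power_mult[symmetric])
  next
    case (degenerate c)
    have "(\<integral>\<omega>. Z \<omega> \<partial>M) = c"
      using integral_cong_AE[of Z M "\<lambda>_. c"] degenerate by (simp add: prob_space)
    with mean degenerate have "AE \<omega> in M. 0 = (Z \<omega>) ^ k" if "k > 0" for k :: nat
      using that by auto
    then have "integrable M (\<lambda>\<omega>. (Z \<omega>) ^ k) \<and> (\<integral>\<omega>. (Z \<omega>) ^ k \<partial>M) = 0" if "k > 0" for k
      using that by (auto intro: integrable_cong_AE_imp[OF integrable_zero] integral_eq_zero_AE)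
    from this[of 1] this[of 2] this[of 4] show ?thesis by simp
  qed
  then show "integrable M Z" "integrable M (\<lambda>\<omega>. (Z \<omega>)\<^sup>2)" "integrable M (\<lambda>\<omega>. (Z \<omega>) ^ 4)"
    "(\<integral>\<omega>. (Z \<omega>) ^ 4 \<partial>M) = 3 * (\<integral>\<omega>. (Z \<omega>)\<^sup>2 \<partial>M)\<^sup>2"
    by auto
qed

lemma sq_diff_sq_le:
  fixes x y v :: real
  assumes "v > 0"
  shows "(x\<^sup>2 - y\<^sup>2)\<^sup>2 \<le> ((x - y) ^ 4 / v + v * (x + y) ^ 4) / 2"
proof -
  have "(x\<^sup>2 - y\<^sup>2)\<^sup>2 = (x - y)\<^sup>2 * (x + y)\<^sup>2"
    by (simp add: power2_eq_square algebra_simps)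
  also have "\<dots> \<le> (((x - y)\<^sup>2)\<^sup>2 / v + v * ((x + y)\<^sup>2)\<^sup>2) / 2"
    using assms sum_squares_bound[of "(x - y)\<^sup>2 / sqrt v" "sqrt v * (x + y)\<^sup>2"]
    by (simp add: power_mult_distrib power_divide field_simps)
  finally show ?thesis by (simp add: power_mult[symmetric])
qed

lemma integral_weighted_Cauchy_Schwarz:
  fixes w g :: "real \<Rightarrow> real"
  assumes w: "continuous_on {a..b} w" "\<And>t. t \<in> {a..b} \<Longrightarrow> 0 \<le> w t" "integral {a..b} w > 0"
    and g: "continuous_on {a..b} g"
  shows "(integral {a..b} (\<lambda>t. w t * g t))\<^sup>2 \<le> integral {a..b} w * integral {a..b} (\<lambda>t. w t * (g t)\<^sup>2)"
proof -
  define W where "W = integral {a..b} w"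
  define A where "A = integral {a..b} (\<lambda>t. w t * g t)"
  define C where "C = integral {a..b} (\<lambda>t. w t * (g t)\<^sup>2)"
  have "0 \<le> integral {a..b} (\<lambda>t. w t * (g t - A / W)\<^sup>2)"
    using w g by (intro integral_nonneg integrable_continuous_interval continuous_intros) auto
  also have "\<dots> = integral {a..b} (\<lambda>t. w t * (g t)\<^sup>2 - (2 * A / W) * (w t * g t) + (A / W)\<^sup>2 * w t)"
    by (rule integral_cong) (simp add: power2_eq_square algebra_simps)
  also have "\<dots> = C - (2 * A / W) * A + (A / W)\<^sup>2 * W"
    unfolding C_def A_def W_def using w g
    by (simp add: integral_add integral_diff integrable_continuous_interval continuous_intros)
  also have "\<dots> = C - A\<^sup>2 / W"
    using w(3) by (simp add: W_def field_simps power2_eq_square)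
  finally show ?thesis
    using w(3) unfolding W_def A_def C_def by (simp add: field_simps)
qed

lemma sq_weighted_integral_deviation_le:
  fixes w f :: "real \<Rightarrow> real"
  assumes w: "continuous_on {a..b} w" "\<And>t. t \<in> {a..b} \<Longrightarrow> 0 \<le> w t" "integral {a..b} w > 0"
    and f: "continuous_on {a..b} f"
  defines "W \<equiv> integral {a..b} w"
  shows "(c * integral {a..b} (\<lambda>t. w t * f t) - y)\<^sup>2
    \<le> 2 * c\<^sup>2 * W * integral {a..b} (\<lambda>t. w t * (f t - y)\<^sup>2) + 2 * (c * W - 1)\<^sup>2 * y\<^sup>2"
proof -
  define K where "K = integral {a..b} (\<lambda>t. w t * (f t - y))"
  have K: "K = integral {a..b} (\<lambda>t. w t * f t) - W * y"
    unfolding K_def W_def using w f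
    by (simp add: right_diff_distrib integral_diff integrable_continuous_interval continuous_intros)
  have "c * integral {a..b} (\<lambda>t. w t * f t) - y = c * K + (c * W - 1) * y"
    unfolding K by (simp add: algebra_simps)
  then have "(c * integral {a..b} (\<lambda>t. w t * f t) - y)\<^sup>2 \<le> 2 * (c * K)\<^sup>2 + 2 * ((c * W - 1) * y)\<^sup>2"
    using sum_squares_bound[of "c * K" "(c * W - 1) * y"] by (simp add: power2_sum)
  also have "\<dots> \<le> 2 * c\<^sup>2 * (W * integral {a..b} (\<lambda>t. w t * (f t - y)\<^sup>2)) + 2 * (c * W - 1)\<^sup>2 * y\<^sup>2"
  proof -
    have "K\<^sup>2 \<le> W * integral {a..b} (\<lambda>t. w t * (f t - y)\<^sup>2)"
      unfolding K_def W_def by (rule integral_weighted_Cauchy_Schwarz)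
        (use w f in \<open>auto intro!: continuous_intros\<close>)
    then show ?thesis by (simp add: power_mult_distrib mult_left_mono)
  qed
  finally show ?thesis by (simp add: mult.assoc)
qed

lemma continuous_on_powr_unit_interval:
  fixes a :: real
  assumes "a > 0"
  shows "continuous_on {0..1} (\<lambda>t. t powr a)" "continuous_on {0..1} (\<lambda>t. (1 - t) powr a)"
  using assms by (intro continuous_on_powr' continuous_intros; simp)+

lemma beta_integral_le:
  fixes a p \<delta> :: real
  assumes "a > 0" "p > 0" "0 < \<delta>" "\<delta> < 1"
  shows "integral {0..1} (\<lambda>t. t powr a * (1 - t) powr p) \<le> \<delta> powr p / (a + 1) + (1 - \<delta>) powr a"
proof -
  have bound: "t powr a * (1 - t) powr p \<le> \<delta> powr p * t powr a + (1 - \<delta>) powr a" if "t \<in> {0..1}" for t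
  proof (cases "t \<ge> 1 - \<delta>")
    case True
    then have "(1 - t) powr p \<le> \<delta> powr p" using that assms by (intro powr_mono2) auto
    then have "t powr a * (1 - t) powr p \<le> \<delta> powr p * t powr a"
      by (subst mult.commute) (rule mult_right_mono; simp)
    then show ?thesis by (simp add: add_increasing2)
  next
    case False
    then have "t powr a \<le> (1 - \<delta>) powr a" using that assms by (intro powr_mono2) auto
    moreover have "(1 - t) powr p \<le> 1" using that assms by (intro powr_le1) auto
    ultimately have "t powr a * (1 - t) powr p \<le> (1 - \<delta>) powr a"
      using mult_mono[of "t powr a" "(1 - \<delta>) powr a" "(1 - t) powr p" 1] by simp
    then show ?thesis by (simp add: add_increasing)
  qed
  have majorant: "((\<lambda>t. \<delta> powr p * t powr a + (1 - \<delta>) powr a)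
      has_integral \<delta> powr p / (a + 1) + (1 - \<delta>) powr a) {0..1}"
    using has_integral_mult_right[OF has_integral_powr_from_0[of a 1], of "\<delta> powr p"] assms
      has_integral_const_real[of "(1 - \<delta>) powr a" 0 1]
    by (auto dest: has_integral_add)
  have "((\<lambda>t. t powr a * (1 - t) powr p) has_integral integral {0..1} (\<lambda>t. t powr a * (1 - t) powr p)) {0..1}"
    by (intro integrable_integral integrable_continuous_interval continuous_on_mult
        continuous_on_powr_unit_interval assms)
  from has_integral_le[OF this majorant bound] show ?thesis .
qed

lemma tendsto_scaled_beta_integral:
  fixes p q :: real
  assumes "p > 0"
  shows "((\<lambda>a. (a + q) * integral {0..1} (\<lambda>t. t powr a * (1 - t) powr p)) \<longlongrightarrow> 0) at_top"
proof (rule tendsto_sandwich)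
  show "\<forall>\<^sub>F a in at_top. 0 \<le> (a + q) * integral {0..1} (\<lambda>t. t powr a * (1 - t) powr p)"
    using eventually_gt_at_top[of "max 1 (- q)"]
  proof eventually_elim
    case (elim a)
    then show ?case using assms
      by (intro mult_nonneg_nonneg integral_nonneg integrable_continuous_interval continuous_on_mult
          continuous_on_powr_unit_interval) auto
  qed
  \<comment> \<open>split the integral at \<open>1 - \<delta>\<close> with \<open>\<delta> = 1 / sqrt a\<close>\<close>
  show "\<forall>\<^sub>F a in at_top. (a + q) * integral {0..1} (\<lambda>t. t powr a * (1 - t) powr p)
      \<le> (a + q) * ((1 / sqrt a) powr p / (a + 1) + (1 - 1 / sqrt a) powr a)"
    using eventually_gt_at_top[of "max 1 (- q)"]
  proof eventually_elim
    case (elim a)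
    then show ?case using assms
      by (intro mult_left_mono beta_integral_le) (auto simp: divide_less_eq)
  qed
  show "((\<lambda>a. (a + q) * ((1 / sqrt a) powr p / (a + 1) + (1 - 1 / sqrt a) powr a)) \<longlongrightarrow> 0) at_top"
    using assms by real_asymp
qed simp

lemma LIMSEQ_floor_grid: "(\<lambda>n. \<lfloor>real (Suc n) * t\<rfloor> / real (Suc n)) \<longlonglongrightarrow> t"
proof (rule tendsto_sandwich)
  have "(\<lambda>n. 1 / real (Suc n)) \<longlonglongrightarrow> 0"
    using LIMSEQ_inverse_real_of_nat by (simp add: inverse_eq_divide)
  from tendsto_diff[OF tendsto_const this] show "(\<lambda>n. t - 1 / real (Suc n)) \<longlonglongrightarrow> t"
    by simp
  have "t - 1 / real (Suc n) \<le> \<lfloor>real (Suc n) * t\<rfloor> / real (Suc n)" for n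
    using divide_right_mono[of "real (Suc n) * t - 1" "\<lfloor>real (Suc n) * t\<rfloor>" "real (Suc n)"]
    by (simp add: diff_divide_distrib)
  then show "\<forall>\<^sub>F n in sequentially. t - 1 / real (Suc n) \<le> \<lfloor>real (Suc n) * t\<rfloor> / real (Suc n)"
    by simp
  have "\<lfloor>real (Suc n) * t\<rfloor> / real (Suc n) \<le> t" for n
    using divide_right_mono[of "\<lfloor>real (Suc n) * t\<rfloor>" "real (Suc n) * t" "real (Suc n)"] by simp
  then show "\<forall>\<^sub>F n in sequentially. \<lfloor>real (Suc n) * t\<rfloor> / real (Suc n) \<le> t"
    by simp
qed simp

lemma borel_measurable_continuous_process:
  fixes X :: "real \<Rightarrow> 'a \<Rightarrow> real"
  assumes X: "\<And>t. X t \<in> borel_measurable M"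
    and paths: "\<And>\<omega>. \<omega> \<in> space M \<Longrightarrow> continuous_on UNIV (\<lambda>t. X t \<omega>)"
  shows "(\<lambda>x. X (snd x) (fst x)) \<in> borel_measurable (M \<Otimes>\<^sub>M lborel)"
proof (rule borel_measurable_LIMSEQ_real)
  \<comment> \<open>each approximation takes countably many values in \<open>t\<close>\<close>
  fix n :: nat
  show "(\<lambda>x. X (\<lfloor>real (Suc n) * snd x\<rfloor> / real (Suc n)) (fst x)) \<in> borel_measurable (M \<Otimes>\<^sub>M lborel)"
  proof (rule measurable_compose_countable[where f = "\<lambda>i x. X (of_int i / real (Suc n)) (fst x)"])
    show "(\<lambda>x. X (of_int i / real (Suc n)) (fst x)) \<in> borel_measurable (M \<Otimes>\<^sub>M lborel)" for i :: int
      using measurable_comp[OF measurable_fst X] by (simp add: comp_def)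
  qed measurable
next
  fix x :: "'a \<times> real"
  assume "x \<in> space (M \<Otimes>\<^sub>M lborel)"
  then have "isCont (\<lambda>t. X t (fst x)) (snd x)"
    using paths[of "fst x"] by (simp add: space_pair_measure mem_Times_iff continuous_on_eq_continuous_at)
  then show "(\<lambda>n. X (\<lfloor>real (Suc n) * snd x\<rfloor> / real (Suc n)) (fst x)) \<longlonglongrightarrow> X (snd x) (fst x)"
    using isCont_tendsto_compose LIMSEQ_floor_grid by blast
qed

lemma borel_measurable_integral_continuous_paths:
  fixes h :: "real \<Rightarrow> 'a \<Rightarrow> real"
  assumes hm[measurable]: "(\<lambda>x. h (snd x) (fst x)) \<in> borel_measurable (M \<Otimes>\<^sub>M lborel)"
    and hc: "\<And>\<omega>. \<omega> \<in> space M \<Longrightarrow> continuous_on {a..b} (\<lambda>t. h t \<omega>)"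
  shows "(\<lambda>\<omega>. integral {a..b} (\<lambda>t. h t \<omega>)) \<in> borel_measurable M"
proof -
  have "(\<lambda>\<omega>. LINT t:{a..b}|lborel. h t \<omega>) \<in> borel_measurable M"
    unfolding set_lebesgue_integral_def by measurable
  moreover have "(LINT t:{a..b}|lborel. h t \<omega>) = integral {a..b} (\<lambda>t. h t \<omega>)" if "\<omega> \<in> space M" for \<omega>
    using borel_integrable_compact[OF compact_Icc hc[OF that]]
    by (intro set_borel_integral_eq_integral) (simp add: set_integrable_def)
  ultimately show ?thesis
    by (rule measurable_cong[THEN iffD1, rotated])
qed

lemma nn_integral_integral_continuous_paths_le:
  fixes h :: "real \<Rightarrow> 'a \<Rightarrow> real"
  assumes "sigma_finite_measure M"
    and hm[measurable]: "(\<lambda>x. h (snd x) (fst x)) \<in> borel_measurable (M \<Otimes>\<^sub>M lborel)"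
    and h0: "\<And>t \<omega>. t \<in> {a..b} \<Longrightarrow> \<omega> \<in> space M \<Longrightarrow> 0 \<le> h t \<omega>"
    and hc: "\<And>\<omega>. \<omega> \<in> space M \<Longrightarrow> continuous_on {a..b} (\<lambda>t. h t \<omega>)"
    and hi: "\<And>t. t \<in> {a..b} \<Longrightarrow> integrable M (h t)"
    and hu: "\<And>t. t \<in> {a..b} \<Longrightarrow> (\<integral>\<omega>. h t \<omega> \<partial>M) \<le> u t"
    and uc: "continuous_on {a..b} u"
  shows "(\<integral>\<^sup>+\<omega>. ennreal (integral {a..b} (\<lambda>t. h t \<omega>)) \<partial>M) \<le> ennreal (integral {a..b} u)"
proof -
  interpret sigma_finite_measure M by fact
  interpret pair_sigma_finite M lborel ..
  have u_nonneg: "0 \<le> u t" if "t \<in> {a..b}" for t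
    using h0[OF that] hu[OF that] by (metis AE_I2 integral_nonneg_AE order_trans)
  have "(\<integral>\<^sup>+\<omega>. ennreal (integral {a..b} (\<lambda>t. h t \<omega>)) \<partial>M)
      = (\<integral>\<^sup>+\<omega>. (\<integral>\<^sup>+t. ennreal (h t \<omega>) * indicator {a..b} t \<partial>lborel) \<partial>M)"
    using h0 hc
    by (intro nn_integral_cong nn_integral_has_integral_lebesgue'[symmetric] integrable_integral
        integrable_continuous_interval) auto
  also have "\<dots> = (\<integral>\<^sup>+t. (\<integral>\<^sup>+\<omega>. ennreal (h t \<omega>) * indicator {a..b} t \<partial>M) \<partial>lborel)"
    by (rule Fubini'[of "\<lambda>\<omega> t. ennreal (h t \<omega>) * indicator {a..b} t", symmetric]) measurable
  also have "\<dots> \<le> (\<integral>\<^sup>+t. ennreal (u t) * indicator {a..b} t \<partial>lborel)"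
  proof (intro nn_integral_mono)
    fix t
    show "(\<integral>\<^sup>+\<omega>. ennreal (h t \<omega>) * indicator {a..b} t \<partial>M) \<le> ennreal (u t) * indicator {a..b} t"
    proof (cases "t \<in> {a..b}")
      case True
      then have "(\<integral>\<^sup>+\<omega>. ennreal (h t \<omega>) \<partial>M) = ennreal (\<integral>\<omega>. h t \<omega> \<partial>M)"
        using h0 by (intro nn_integral_eq_integral hi AE_I2) auto
      with True show ?thesis using hu by (simp add: ennreal_leI)
    qed simp
  qed
  also have "\<dots> = ennreal (integral {a..b} u)"
    using u_nonneg uc
    by (intro nn_integral_has_integral_lebesgue' integrable_integral integrable_continuous_interval)
  finally show ?thesis .
qed

lemma integral_continuous_paths_expectation_le:
  fixes h :: "real \<Rightarrow> 'a \<Rightarrow> real"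
  assumes "sigma_finite_measure M"
    and hm[measurable]: "(\<lambda>x. h (snd x) (fst x)) \<in> borel_measurable (M \<Otimes>\<^sub>M lborel)"
    and h0: "\<And>t \<omega>. t \<in> {a..b} \<Longrightarrow> \<omega> \<in> space M \<Longrightarrow> 0 \<le> h t \<omega>"
    and hc: "\<And>\<omega>. \<omega> \<in> space M \<Longrightarrow> continuous_on {a..b} (\<lambda>t. h t \<omega>)"
    and hi: "\<And>t. t \<in> {a..b} \<Longrightarrow> integrable M (h t)"
    and hu: "\<And>t. t \<in> {a..b} \<Longrightarrow> (\<integral>\<omega>. h t \<omega> \<partial>M) \<le> u t"
    and uc: "continuous_on {a..b} u"
  shows "integrable M (\<lambda>\<omega>. integral {a..b} (\<lambda>t. h t \<omega>))"
    "(\<integral>\<omega>. integral {a..b} (\<lambda>t. h t \<omega>) \<partial>M) \<le> integral {a..b} u"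
proof -
  define J where "J \<omega> = integral {a..b} (\<lambda>t. h t \<omega>)" for \<omega>
  have [measurable]: "J \<in> borel_measurable M"
    unfolding J_def using hm hc by (rule borel_measurable_integral_continuous_paths)
  have J_nonneg: "0 \<le> J \<omega>" if "\<omega> \<in> space M" for \<omega>
    unfolding J_def using h0 hc that by (intro integral_nonneg integrable_continuous_interval) auto
  have bound: "(\<integral>\<^sup>+\<omega>. ennreal (J \<omega>) \<partial>M) \<le> ennreal (integral {a..b} u)"
    unfolding J_def using assms by (rule nn_integral_integral_continuous_paths_le)
  have "integrable M J"
    using bound J_nonneg by (intro integrableI_nonneg) (auto intro: AE_I2 le_less_trans)
  moreover have "0 \<le> integral {a..b} u"
  proof -
    have "0 \<le> u t" if "t \<in> {a..b}" for t
      using h0[OF that] hu[OF that] by (metis AE_I2 integral_nonneg_AE order_trans)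
    then show ?thesis
      using uc by (intro integral_nonneg integrable_continuous_interval)
  qed
  ultimately show "integrable M (\<lambda>\<omega>. integral {a..b} (\<lambda>t. h t \<omega>))"
    "(\<integral>\<omega>. integral {a..b} (\<lambda>t. h t \<omega>) \<partial>M) \<le> integral {a..b} u"
    using bound J_nonneg by (simp_all add: J_def[abs_def] nn_integral_eq_integral AE_I2)
qed

lemma integrable_square_of_square_diff:
  fixes X Z :: "'a \<Rightarrow> real"
  assumes [measurable]: "X \<in> borel_measurable M"
    and "integrable M (\<lambda>\<omega>. (X \<omega> - Z \<omega>)\<^sup>2)" "integrable M (\<lambda>\<omega>. (Z \<omega>)\<^sup>2)"
  shows "integrable M (\<lambda>\<omega>. (X \<omega>)\<^sup>2)"
proof (rule Bochner_Integration.integrable_bound)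
  show "integrable M (\<lambda>\<omega>. 2 * (X \<omega> - Z \<omega>)\<^sup>2 + 2 * (Z \<omega>)\<^sup>2)"
    using assms by simp
  have "(X \<omega>)\<^sup>2 \<le> 2 * (X \<omega> - Z \<omega>)\<^sup>2 + 2 * (Z \<omega>)\<^sup>2" for \<omega>
    using zero_le_power2[of "X \<omega> - 2 * Z \<omega>"] by (simp add: power2_eq_square algebra_simps)
  then show "AE \<omega> in M. norm ((X \<omega>)\<^sup>2) \<le> norm (2 * (X \<omega> - Z \<omega>)\<^sup>2 + 2 * (Z \<omega>)\<^sup>2)"
    by (intro AE_I2) (simp add: abs_of_nonneg)
qed measurable

locale fbm_process =
  fixes M :: "'a measure" and H :: real and B :: "real \<Rightarrow> 'a \<Rightarrow> real"
  assumes fbm: "fbm M H B"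
begin

sublocale prob_space M
  using fbm by (simp add: fbm_def)

lemma Hurst_pos: "0 < H"
  using fbm by (simp add: fbm_def)

lemma borel_measurable_B: "t \<in> {0..1} \<Longrightarrow> B t \<in> borel_measurable M"
  using fbm by (simp add: fbm_def)

lemma continuous_on_path: "\<omega> \<in> space M \<Longrightarrow> continuous_on {0..1} (\<lambda>t. B t \<omega>)"
  using fbm by (simp add: fbm_def)

lemma expectation_B: "t \<in> {0..1} \<Longrightarrow> (\<integral>\<omega>. B t \<omega> \<partial>M) = 0"
  using fbm by (simp add: fbm_def)

lemma expectation_B_mult:
  "s \<in> {0..1} \<Longrightarrow> t \<in> {0..1} \<Longrightarrow>
    (\<integral>\<omega>. B s \<omega> * B t \<omega> \<partial>M) = (t powr (2*H) + s powr (2*H) - \<bar>s - t\<bar> powr (2*H)) / 2"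
  using fbm by (simp add: fbm_def)

lemma gaussian_rv_finite_combination:
  "finite I \<Longrightarrow> I \<subseteq> {0..1} \<Longrightarrow> gaussian_rv M (\<lambda>\<omega>. \<Sum>t\<in>I. c t * B t \<omega>)"
  using fbm by (simp add: fbm_def)

lemma gaussian_rv_linear_combination:
  assumes "s \<in> {0..1}" "t \<in> {0..1}"
  shows "gaussian_rv M (\<lambda>\<omega>. a * B s \<omega> + b * B t \<omega>)"
proof (cases "s = t")
  case True
  with assms gaussian_rv_finite_combination[of "{s}" "\<lambda>_. a + b"] show ?thesis
    by (simp add: distrib_right)
next
  case False
  with assms gaussian_rv_finite_combination[of "{s, t}" "\<lambda>u. if u = s then a else b"] show ?thesis
    by simp
qed

lemma moments_B:
  assumes "t \<in> {0..1}"
  shows "integrable M (B t)" "integrable M (\<lambda>\<omega>. (B t \<omega>)\<^sup>2)" "integrable M (\<lambda>\<omega>. (B t \<omega>) ^ 4)"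
    "(\<integral>\<omega>. (B t \<omega>) ^ 4 \<partial>M) = 3 * (\<integral>\<omega>. (B t \<omega>)\<^sup>2 \<partial>M)\<^sup>2"
  using centered_gaussian_rv_moments[OF prob_space_axioms
      gaussian_rv_linear_combination[OF assms assms, of 1 0] ] expectation_B[OF assms]
  by simp_all

lemma moments_linear_combination:
  fixes a b :: real
  assumes s: "s \<in> {0..1}" and t: "t \<in> {0..1}"
  defines "Z \<equiv> \<lambda>\<omega>. a * B s \<omega> + b * B t \<omega>"
  shows "integrable M (\<lambda>\<omega>. (Z \<omega>)\<^sup>2)" "integrable M (\<lambda>\<omega>. (Z \<omega>) ^ 4)"
    "(\<integral>\<omega>. (Z \<omega>) ^ 4 \<partial>M) = 3 * (\<integral>\<omega>. (Z \<omega>)\<^sup>2 \<partial>M)\<^sup>2"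
proof -
  have "(\<integral>\<omega>. Z \<omega> \<partial>M) = 0"
    unfolding Z_def using moments_B(1) expectation_B s t by simp
  from centered_gaussian_rv_moments[OF prob_space_axioms _ this] gaussian_rv_linear_combination[OF s t]
  show "integrable M (\<lambda>\<omega>. (Z \<omega>)\<^sup>2)" "integrable M (\<lambda>\<omega>. (Z \<omega>) ^ 4)"
    "(\<integral>\<omega>. (Z \<omega>) ^ 4 \<partial>M) = 3 * (\<integral>\<omega>. (Z \<omega>)\<^sup>2 \<partial>M)\<^sup>2"
    unfolding Z_def by simp_all
qed

lemma integrable_B_mult:
  assumes "s \<in> {0..1}" "t \<in> {0..1}"
  shows "integrable M (\<lambda>\<omega>. B s \<omega> * B t \<omega>)"
proof -
  have "(\<lambda>\<omega>. B s \<omega> * B t \<omega>) = (\<lambda>\<omega>. ((1 * B s \<omega> + 1 * B t \<omega>)\<^sup>2 - (B s \<omega>)\<^sup>2 - (B t \<omega>)\<^sup>2) / 2)"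
    by (auto simp: power2_eq_square algebra_simps)
  then show ?thesis
    using moments_linear_combination(1)[OF assms, of 1 1] moments_B(2) assms by simp
qed

lemma second_moment_linear_combination:
  assumes s: "s \<in> {0..1}" and t: "t \<in> {0..1}"
  shows "(\<integral>\<omega>. (a * B s \<omega> + b * B t \<omega>)\<^sup>2 \<partial>M)
    = a\<^sup>2 * s powr (2*H) + a * b * (t powr (2*H) + s powr (2*H) - \<bar>s - t\<bar> powr (2*H))
      + b\<^sup>2 * t powr (2*H)"
proof -
  have "(\<lambda>\<omega>. (a * B s \<omega> + b * B t \<omega>)\<^sup>2)
      = (\<lambda>\<omega>. a\<^sup>2 * (B s \<omega>)\<^sup>2 + (2 * a * b) * (B s \<omega> * B t \<omega>) + b\<^sup>2 * (B t \<omega>)\<^sup>2)"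
    by (auto simp: power2_eq_square algebra_simps)
  then have "(\<integral>\<omega>. (a * B s \<omega> + b * B t \<omega>)\<^sup>2 \<partial>M)
      = a\<^sup>2 * (\<integral>\<omega>. (B s \<omega>)\<^sup>2 \<partial>M) + (2 * a * b) * (\<integral>\<omega>. B s \<omega> * B t \<omega> \<partial>M)
        + b\<^sup>2 * (\<integral>\<omega>. (B t \<omega>)\<^sup>2 \<partial>M)"
    using moments_B(2)[OF s] moments_B(2)[OF t] integrable_B_mult[OF s t] by simp
  also have "\<dots> = a\<^sup>2 * s powr (2*H) + a * b * (t powr (2*H) + s powr (2*H) - \<bar>s - t\<bar> powr (2*H))
      + b\<^sup>2 * t powr (2*H)"
    using expectation_B_mult[OF s s] expectation_B_mult[OF s t] expectation_B_mult[OF t t]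
    by (simp add: power2_eq_square)
  finally show ?thesis .
qed

lemma fourth_moments_increment:
  assumes s: "s \<in> {0..1}" and t: "t \<in> {0..1}"
  shows "integrable M (\<lambda>\<omega>. (B t \<omega> - B s \<omega>) ^ 4)"
    "(\<integral>\<omega>. (B t \<omega> - B s \<omega>) ^ 4 \<partial>M) = 3 * (\<bar>t - s\<bar> powr (2*H))\<^sup>2"
    "integrable M (\<lambda>\<omega>. (B t \<omega> + B s \<omega>) ^ 4)"
    "(\<integral>\<omega>. (B t \<omega> + B s \<omega>) ^ 4 \<partial>M) \<le> 48"
proof -
  note diff = moments_linear_combination[OF t s, of 1 "-1", simplified]
  note sum = moments_linear_combination[OF t s, of 1 1, simplified]
  show "integrable M (\<lambda>\<omega>. (B t \<omega> - B s \<omega>) ^ 4)" "integrable M (\<lambda>\<omega>. (B t \<omega> + B s \<omega>) ^ 4)"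
    using diff(2) sum(2) by simp_all
  have "(\<integral>\<omega>. (B t \<omega> - B s \<omega>)\<^sup>2 \<partial>M) = \<bar>t - s\<bar> powr (2*H)"
    using second_moment_linear_combination[OF t s, of 1 "-1"] by simp
  with diff(3) show "(\<integral>\<omega>. (B t \<omega> - B s \<omega>) ^ 4 \<partial>M) = 3 * (\<bar>t - s\<bar> powr (2*H))\<^sup>2"
    by simp
  have powr_le_1: "u powr (2*H) \<le> 1" if "u \<in> {0..1}" for u
    using that Hurst_pos by (intro powr_le1) auto
  have "(\<integral>\<omega>. (B t \<omega> + B s \<omega>)\<^sup>2 \<partial>M) = 2 * t powr (2*H) + 2 * s powr (2*H) - \<bar>t - s\<bar> powr (2*H)"
    using second_moment_linear_combination[OF t s, of 1 1] by simp
  then have "(\<integral>\<omega>. (B t \<omega> + B s \<omega>)\<^sup>2 \<partial>M) \<le> 4"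
    using powr_le_1[OF s] powr_le_1[OF t] powr_ge_zero[of "\<bar>t - s\<bar>" "2*H"] by linarith
  moreover have "0 \<le> (\<integral>\<omega>. (B t \<omega> + B s \<omega>)\<^sup>2 \<partial>M)"
    by (rule Bochner_Integration.integral_nonneg) simp
  ultimately show "(\<integral>\<omega>. (B t \<omega> + B s \<omega>) ^ 4 \<partial>M) \<le> 48"
    using sum(3) power_mono[of _ "4::real" 2] by simp
qed

lemma square_increment_bound:
  assumes s: "s \<in> {0..1}" and t: "t \<in> {0..1}"
  shows "integrable M (\<lambda>\<omega>. ((B t \<omega>)\<^sup>2 - (B s \<omega>)\<^sup>2)\<^sup>2)"
    "(\<integral>\<omega>. ((B t \<omega>)\<^sup>2 - (B s \<omega>)\<^sup>2)\<^sup>2 \<partial>M) \<le> 26 * \<bar>t - s\<bar> powr (2*H)"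
proof -
  have "integrable M (\<lambda>\<omega>. ((B t \<omega>)\<^sup>2 - (B s \<omega>)\<^sup>2)\<^sup>2) \<and>
    (\<integral>\<omega>. ((B t \<omega>)\<^sup>2 - (B s \<omega>)\<^sup>2)\<^sup>2 \<partial>M) \<le> 26 * \<bar>t - s\<bar> powr (2*H)"
  proof (cases "s = t")
    case False
    define v where "v = \<bar>t - s\<bar> powr (2*H)"
    have "v > 0" using False by (simp add: v_def)
    note moments = fourth_moments_increment[OF s t, folded v_def]
    let ?majorant = "\<lambda>\<omega>. ((B t \<omega> - B s \<omega>) ^ 4 / v + v * (B t \<omega> + B s \<omega>) ^ 4) / 2"
    have pointwise: "((B t \<omega>)\<^sup>2 - (B s \<omega>)\<^sup>2)\<^sup>2 \<le> ?majorant \<omega>" for \<omega>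
      using sq_diff_sq_le[OF \<open>v > 0\<close>] .
    have majorant: "integrable M ?majorant"
      using moments by simp
    have "integrable M (\<lambda>\<omega>. ((B t \<omega>)\<^sup>2 - (B s \<omega>)\<^sup>2)\<^sup>2)"
      using borel_measurable_B[OF s] borel_measurable_B[OF t] pointwise
      by (intro Bochner_Integration.integrable_bound[OF majorant] AE_I2)
        (auto intro: order_trans[OF _ abs_ge_self])
    moreover have "(\<integral>\<omega>. ((B t \<omega>)\<^sup>2 - (B s \<omega>)\<^sup>2)\<^sup>2 \<partial>M) \<le> 26 * v"
    proof -
      have "(\<integral>\<omega>. ((B t \<omega>)\<^sup>2 - (B s \<omega>)\<^sup>2)\<^sup>2 \<partial>M) \<le> (\<integral>\<omega>. ?majorant \<omega> \<partial>M)"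
        using calculation majorant pointwise by (rule integral_mono)
      also have "\<dots> = (3 * v\<^sup>2 / v + v * (\<integral>\<omega>. (B t \<omega> + B s \<omega>) ^ 4 \<partial>M)) / 2"
        using moments by simp
      also have "\<dots> \<le> (3 * v + v * 48) / 2"
        using moments(4) \<open>v > 0\<close> by (simp add: power2_eq_square)
      finally show ?thesis using \<open>v > 0\<close> by simp
    qed
    ultimately show ?thesis by (simp add: v_def)
  qed simp
  then show "integrable M (\<lambda>\<omega>. ((B t \<omega>)\<^sup>2 - (B s \<omega>)\<^sup>2)\<^sup>2)"
    "(\<integral>\<omega>. ((B t \<omega>)\<^sup>2 - (B s \<omega>)\<^sup>2)\<^sup>2 \<partial>M) \<le> 26 * \<bar>t - s\<bar> powr (2*H)"
    by auto
qed

lemma fourth_moment_at_one: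
  "integrable M (\<lambda>\<omega>. (B 1 \<omega>) ^ 4)" "(\<integral>\<omega>. (B 1 \<omega>) ^ 4 \<partial>M) = 3"
  using moments_B(3,4)[of 1] expectation_B_mult[of 1 1] by (simp_all add: power2_eq_square)

text \<open>Paths are extended constantly outside \<open>[0,1]\<close>, so that they can be paired with \<open>lborel\<close>.\<close>

lemma continuous_on_clamped_path:
  "\<omega> \<in> space M \<Longrightarrow> continuous_on UNIV (\<lambda>t. B (max 0 (min 1 t)) \<omega>)"
  by (rule continuous_on_compose2[OF continuous_on_path]) (auto intro!: continuous_intros)

lemma borel_measurable_clamped_path[measurable]:
  "(\<lambda>x. B (max 0 (min 1 (snd x))) (fst x)) \<in> borel_measurable (M \<Otimes>\<^sub>M lborel)"
  using borel_measurable_B continuous_on_clamped_path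
  by (intro borel_measurable_continuous_process[where X = "\<lambda>t. B (max 0 (min 1 t))"]) auto

lemma borel_measurable_weighted_square_integral:
  assumes "w \<in> borel_measurable borel" "continuous_on {0..1} w"
  shows "(\<lambda>\<omega>. integral {0..1} (\<lambda>t. w t * (B t \<omega>)\<^sup>2)) \<in> borel_measurable M"
proof -
  have "(\<lambda>\<omega>. integral {0..1} (\<lambda>t. w t * (B (max 0 (min 1 t)) \<omega>)\<^sup>2)) \<in> borel_measurable M"
    using assms continuous_on_subset[OF continuous_on_clamped_path]
    by (intro borel_measurable_integral_continuous_paths) (measurable, auto intro!: continuous_intros)
  moreover have "integral {0..1} (\<lambda>t. w t * (B (max 0 (min 1 t)) \<omega>)\<^sup>2)
      = integral {0..1} (\<lambda>t. w t * (B t \<omega>)\<^sup>2)" for \<omega>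
    by (rule integral_cong) simp
  ultimately show ?thesis by simp
qed

lemma weighted_square_increment_integral:
  assumes w: "w \<in> borel_measurable borel" "continuous_on {0..1} w" "\<And>t. t \<in> {0..1} \<Longrightarrow> 0 \<le> w t"
  defines "J \<equiv> \<lambda>\<omega>. integral {0..1} (\<lambda>t. w t * ((B t \<omega>)\<^sup>2 - (B 1 \<omega>)\<^sup>2)\<^sup>2)"
  shows "integrable M J" "(\<integral>\<omega>. J \<omega> \<partial>M) \<le> 26 * integral {0..1} (\<lambda>t. w t * (1 - t) powr (2*H))"
proof -
  define h where "h t \<omega> = w t * ((B (max 0 (min 1 t)) \<omega>)\<^sup>2 - (B 1 \<omega>)\<^sup>2)\<^sup>2" for t \<omega>
  define u where "u t = 26 * (w t * (1 - t) powr (2*H))" for t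
  have [measurable]: "B 1 \<in> borel_measurable M"
    by (simp add: borel_measurable_B)
  have "(\<lambda>x. h (snd x) (fst x)) \<in> borel_measurable (M \<Otimes>\<^sub>M lborel)"
    unfolding h_def using w(1) by measurable
  moreover have "0 \<le> h t \<omega>" if "t \<in> {0..1}" for t \<omega>
    using w(3)[OF that] by (simp add: h_def)
  moreover have "continuous_on {0..1} (\<lambda>t. h t \<omega>)" if "\<omega> \<in> space M" for \<omega>
    unfolding h_def using w(2) continuous_on_subset[OF continuous_on_clamped_path[OF that]]
    by (auto intro!: continuous_intros)
  moreover have "integrable M (h t)" if "t \<in> {0..1}" for t
    using square_increment_bound(1)[OF _ that, of 1] that by (simp add: h_def[abs_def])
  moreover have "(\<integral>\<omega>. h t \<omega> \<partial>M) \<le> u t" if "t \<in> {0..1}" for t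
    using mult_left_mono[OF square_increment_bound(2)[OF _ that, of 1] w(3)[OF that]] that
    by (simp add: h_def u_def mult.left_commute)
  moreover have "continuous_on {0..1} u"
    unfolding u_def using w(2) continuous_on_powr_unit_interval(2)[of "2*H"] Hurst_pos
    by (auto intro!: continuous_intros)
  ultimately have "integrable M (\<lambda>\<omega>. integral {0..1} (\<lambda>t. h t \<omega>))"
    "(\<integral>\<omega>. integral {0..1} (\<lambda>t. h t \<omega>) \<partial>M) \<le> integral {0..1} u"
    using integral_continuous_paths_expectation_le[of M h 0 1 u] by (auto intro: sigma_finite_measure)
  moreover have "(\<lambda>\<omega>. integral {0..1} (\<lambda>t. h t \<omega>)) = J"
    unfolding J_def h_def by (intro ext integral_cong) simp
  moreover have "integral {0..1} u = 26 * integral {0..1} (\<lambda>t. w t * (1 - t) powr (2*H))"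
    unfolding u_def by (rule integral_mult_right)
  ultimately show "integrable M J" "(\<integral>\<omega>. J \<omega> \<partial>M) \<le> 26 * integral {0..1} (\<lambda>t. w t * (1 - t) powr (2*H))"
    by simp_all
qed

lemma weighted_square_integral_L2_error_le:
  fixes c :: real
  assumes w: "w \<in> borel_measurable borel" "continuous_on {0..1} w" "\<And>t. t \<in> {0..1} \<Longrightarrow> 0 \<le> w t"
    "integral {0..1} w > 0"
  defines "W \<equiv> integral {0..1} w"
  defines "Y \<equiv> \<lambda>\<omega>. c * integral {0..1} (\<lambda>t. w t * (B t \<omega>)\<^sup>2)"
  shows "Y \<in> borel_measurable M" "integrable M (\<lambda>\<omega>. (Y \<omega>)\<^sup>2)"
    "(\<integral>\<omega>. (Y \<omega> - (B 1 \<omega>)\<^sup>2)\<^sup>2 \<partial>M)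
      \<le> 52 * c\<^sup>2 * W * integral {0..1} (\<lambda>t. w t * (1 - t) powr (2*H)) + 6 * (c * W - 1)\<^sup>2"
proof -
  define J where "J \<omega> = integral {0..1} (\<lambda>t. w t * ((B t \<omega>)\<^sup>2 - (B 1 \<omega>)\<^sup>2)\<^sup>2)" for \<omega>
  define G where "G \<omega> = 2 * c\<^sup>2 * W * J \<omega> + 2 * (c * W - 1)\<^sup>2 * (B 1 \<omega>) ^ 4" for \<omega>
  note J = weighted_square_increment_integral[OF w(1-3), folded J_def]
  have [measurable]: "B 1 \<in> borel_measurable M"
    by (simp add: borel_measurable_B)
  show Y_measurable[measurable]: "Y \<in> borel_measurable M"
    unfolding Y_def using borel_measurable_weighted_square_integral[OF w(1,2)] by simp
  have G_integrable: "integrable M G"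
    unfolding G_def using J fourth_moment_at_one by simp
  have G_nonneg: "0 \<le> G \<omega>" if "\<omega> \<in> space M" for \<omega>
    unfolding G_def J_def W_def using w continuous_on_path[OF that]
    by (intro add_nonneg_nonneg mult_nonneg_nonneg integral_nonneg integrable_continuous_interval
        continuous_intros) auto
  have pointwise: "(Y \<omega> - (B 1 \<omega>)\<^sup>2)\<^sup>2 \<le> G \<omega>" if "\<omega> \<in> space M" for \<omega>
  proof -
    have "continuous_on {0..1} (\<lambda>t. (B t \<omega>)\<^sup>2)"
      using continuous_on_path[OF that] by (intro continuous_intros)
    from sq_weighted_integral_deviation_le[OF w(2-4) this, where c = c and y = "(B 1 \<omega>)\<^sup>2"]
    show ?thesis by (simp add: Y_def G_def J_def W_def power_mult[symmetric])
  qed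
  have error_integrable: "integrable M (\<lambda>\<omega>. (Y \<omega> - (B 1 \<omega>)\<^sup>2)\<^sup>2)"
    using pointwise G_nonneg by (intro Bochner_Integration.integrable_bound[OF G_integrable] AE_I2) auto
  have "integrable M (\<lambda>\<omega>. ((B 1 \<omega>)\<^sup>2)\<^sup>2)"
    using fourth_moment_at_one(1) by (simp flip: power_mult)
  with Y_measurable error_integrable show "integrable M (\<lambda>\<omega>. (Y \<omega>)\<^sup>2)"
    by (rule integrable_square_of_square_diff)
  have "(\<integral>\<omega>. (Y \<omega> - (B 1 \<omega>)\<^sup>2)\<^sup>2 \<partial>M) \<le> (\<integral>\<omega>. G \<omega> \<partial>M)"
    using error_integrable G_integrable pointwise by (rule integral_mono)
  also have "\<dots> = 2 * c\<^sup>2 * W * (\<integral>\<omega>. J \<omega> \<partial>M) + 6 * (c * W - 1)\<^sup>2"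
    unfolding G_def using J(1) fourth_moment_at_one by simp
  also have "\<dots> \<le> 52 * c\<^sup>2 * W * integral {0..1} (\<lambda>t. w t * (1 - t) powr (2*H)) + 6 * (c * W - 1)\<^sup>2"
    using mult_left_mono[OF J(2), of "2 * c\<^sup>2 * W"] w(4) by (simp add: W_def)
  finally show "(\<integral>\<omega>. (Y \<omega> - (B 1 \<omega>)\<^sup>2)\<^sup>2 \<partial>M)
      \<le> 52 * c\<^sup>2 * W * integral {0..1} (\<lambda>t. w t * (1 - t) powr (2*H)) + 6 * (c * W - 1)\<^sup>2" .
qed

lemma powr_weighted_square_integral_L2_error_le:
  fixes \<beta> :: real
  assumes "\<beta> > 0"
  defines "c \<equiv> 2*\<beta> + 2*H + 1"
  defines "Y \<equiv> \<lambda>\<omega>. c * integral {0..1} (\<lambda>t. t powr (2*\<beta>) * (B t \<omega>)\<^sup>2)"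
  shows "Y \<in> borel_measurable M" "integrable M (\<lambda>\<omega>. (Y \<omega>)\<^sup>2)"
    "(\<integral>\<omega>. (Y \<omega> - (B 1 \<omega>)\<^sup>2)\<^sup>2 \<partial>M)
      \<le> 52 * (c / (2*\<beta> + 1)) * (c * integral {0..1} (\<lambda>t. t powr (2*\<beta>) * (1 - t) powr (2*H)))
        + 6 * (c / (2*\<beta> + 1) - 1)\<^sup>2"
proof -
  have "integral {0..1} (\<lambda>t. t powr (2*\<beta>)) = 1 / (2*\<beta> + 1)"
    using has_integral_powr_from_0[of "2*\<beta>" 1] \<open>\<beta> > 0\<close> by (simp add: integral_unique)
  moreover have "(\<lambda>t::real. t powr (2*\<beta>)) \<in> borel_measurable borel"
    by measurable
  moreover have "continuous_on {0..1} (\<lambda>t::real. t powr (2*\<beta>))"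
    using \<open>\<beta> > 0\<close> by (simp add: continuous_on_powr_unit_interval)
  ultimately show "Y \<in> borel_measurable M" "integrable M (\<lambda>\<omega>. (Y \<omega>)\<^sup>2)"
    "(\<integral>\<omega>. (Y \<omega> - (B 1 \<omega>)\<^sup>2)\<^sup>2 \<partial>M)
      \<le> 52 * (c / (2*\<beta> + 1)) * (c * integral {0..1} (\<lambda>t. t powr (2*\<beta>) * (1 - t) powr (2*H)))
        + 6 * (c / (2*\<beta> + 1) - 1)\<^sup>2"
    using weighted_square_integral_L2_error_le[of "\<lambda>t. t powr (2*\<beta>)" c] \<open>\<beta> > 0\<close>
    by (simp_all add: Y_def power2_eq_square)
qed

end

theorem proposition6:
  fixes M :: "'a measure" and H :: real and B :: "real \<Rightarrow> 'a \<Rightarrow> real"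
  assumes "fbm M H B"
  defines "Y \<equiv> (\<lambda>(\<beta>::real) \<omega>. (2*\<beta> + 2*H + 1) *
                   integral {0..1} (\<lambda>t. t powr (2*\<beta>) * (B t \<omega>)\<^sup>2))"
  shows "(\<forall>\<^sub>F \<beta> in at_top. Y \<beta> \<in> borel_measurable M \<and>
            integrable M (\<lambda>\<omega>. (Y \<beta> \<omega>)\<^sup>2)) \<and>
         ((\<lambda>\<beta>. \<integral>\<omega>. (Y \<beta> \<omega> - (B 1 \<omega>)\<^sup>2)\<^sup>2 \<partial>M) \<longlongrightarrow> 0) at_top"
proof -
  interpret fbm_process M H B
    by (rule fbm_process.intro) (rule assms)
  define ratio where "ratio \<beta> = (2*\<beta> + 2*H + 1) / (2*\<beta> + 1)" for \<beta> :: real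
  define kernel where "kernel \<beta> = (2*\<beta> + 2*H + 1) * integral {0..1} (\<lambda>t. t powr (2*\<beta>) * (1 - t) powr (2*H))"
    for \<beta> :: real
  have estimate: "\<forall>\<^sub>F \<beta> in at_top. Y \<beta> \<in> borel_measurable M \<and> integrable M (\<lambda>\<omega>. (Y \<beta> \<omega>)\<^sup>2) \<and>
      (\<integral>\<omega>. (Y \<beta> \<omega> - (B 1 \<omega>)\<^sup>2)\<^sup>2 \<partial>M) \<le> 52 * ratio \<beta> * kernel \<beta> + 6 * (ratio \<beta> - 1)\<^sup>2"
    using eventually_gt_at_top[of 0]
  proof eventually_elim
    case (elim \<beta>)
    show ?case
      unfolding Y_def ratio_def kernel_def using powr_weighted_square_integral_L2_error_le[OF elim] by blast
  qed
  have "(ratio \<longlongrightarrow> 1) at_top"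
    unfolding ratio_def by real_asymp
  moreover have "(kernel \<longlongrightarrow> 0) at_top"
  proof -
    have "filterlim (\<lambda>\<beta>::real. 2 * \<beta>) at_top at_top"
      by real_asymp
    from filterlim_compose[OF tendsto_scaled_beta_integral[of "2*H" "2*H + 1"] this] Hurst_pos
    show ?thesis by (simp add: kernel_def[abs_def] add.assoc)
  qed
  ultimately have "((\<lambda>\<beta>. 52 * ratio \<beta> * kernel \<beta> + 6 * (ratio \<beta> - 1)\<^sup>2) \<longlongrightarrow> 52 * 1 * 0 + 6 * (1 - 1)\<^sup>2) at_top"
    by (intro tendsto_intros)
  with estimate show ?thesis
    by (auto intro: tendsto_sandwich[OF _ _ tendsto_const] elim: eventually_mono)
qed

end
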